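(* Let $T=(P,M,D,O)$ be an operational theory equipped with a convex structure, and suppose $T$ contains a maximally mixed preparation $p^{mix}$. Let $m\in M$ be a perfectly predictable measurement. If $(\Omega,\mu,\xi)$ is a preparation non-contextual ontological representation of $T$ that preserves convexity, then $\xi_m$ is outcome-deterministic: $\xi_m(\lambda)(k)\in\{0,1\}$ for all $\lambda\in\Omega$ and $k\in O^m$.
   Context: An operational theory $T=(P,M,D,O)$ consists of a set $P$ of preparations, a set $M$ of measurements, for each $m\in M$ a finite nonempty set $O^m$ of outcomes (with $O=\bigcup_m O^m$), and for each $(p,m)\in P\times M$ a probability distribution $d_{p,m}:O^m\to[0,1]$; $D=\{d_{p,m}\}$. Statistical equivalence: $p\sim p'$ iff $d_{p,m}=d_{p',m}$ for all $m\in M$; $m\sim m'$ iff $d_{p,m}=d_{p,m'}$ for all $p\in P$; $(m,k)\sim(m',k')$ (for $k\in O^m$, $k'\in O^{m'}$) iff $d_{p,m}(k)=d_{p,m'}(k')$ for all $p\in P$. An ontological representation of $T$ is a triple $(\Omega,\mu,\xi)$ where $\Omega$ is a countable set, $\mu_p$ is a probability distribution on $\Omega$ for each $p\in P$, and for each $m\in M$, $\lambda\in\Omega$, $\xi_m(\lambda)$ is a probability distribution on $O^m$, such that $\sum_{\lambda\in\Omega}\xi_m(\lambda)(k)\mu_p(\lambda)=d_{p,m}(k)$ for all $p,m,k$, and such that for every $\lambda\in\Omega$ there is $p\in P$ with $\mu_p(\lambda)>0$. It is preparation non-contextual if $p\sim p'$ implies $\mu_p=\mu_{p'}$. Convex structure: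 some preparations are designated as (formal) convex combinations $p=\sum_i c_ip_i$ of finitely many preparations $p_i$ with $c_i>0$, $\sum_i c_i=1$, and likewise some measurements are designated as convex combinations $\sum_i c_i m_i$ of measurements with a common outcome set. A representation preserves convexity (Assumption 1) if $\mu_{\sum_i c_ip_i}=\sum_i c_i\mu_{p_i}$ and $\xi_{\sum_i c_im_i}(\lambda)=\sum_i c_i\xi_{m_i}(\lambda)$ for all such designated combinations and all $\lambda$. A measurement $m$ is perfectly predictable if for every $k\in O^m$ there is a preparation $p_k$ with $d_{p_k,m}(k')=\delta_{k,k'}$ for all $k'\in O^m$. A preparation $p^{mix}$ is maximally mixed if (1) for every preparation $p'$, $p^{mix}$ is statistically equivalent to some preparation that is a convex combination (with positive weights) of preparations among which is $p'$; and (2) for every perfectly predictable measurement $m$, $p^{mix}$ is statistically equivalent to some preparation that is a convex combination, with positive weights, of preparations $p_k$ ($k\in O^m$) as in the definition of perfect predictability. *)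

theory Defs
  imports "HOL-Analysis.Analysis"
begin

definition op_theory ::
  "'p set \<Rightarrow> 'm set \<Rightarrow> ('m \<Rightarrow> 'o set) \<Rightarrow> ('p \<Rightarrow> 'm \<Rightarrow> 'o \<Rightarrow> real) \<Rightarrow> bool" where
  "op_theory P M Om d \<longleftrightarrow>
     (\<forall>m\<in>M. finite (Om m) \<and> Om m \<noteq> {}) \<and>
     (\<forall>p\<in>P. \<forall>m\<in>M. (\<forall>k\<in>Om m. d p m k \<ge> 0) \<and> (\<Sum>k\<in>Om m. d p m k) = 1)"

definition prep_equiv ::
  "'m set \<Rightarrow> ('m \<Rightarrow> 'o set) \<Rightarrow> ('p \<Rightarrow> 'm \<Rightarrow> 'o \<Rightarrow> real) \<Rightarrow> 'p \<Rightarrow> 'p \<Rightarrow> bool" where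
  "prep_equiv M Om d p p' \<longleftrightarrow> (\<forall>m\<in>M. \<forall>k\<in>Om m. d p m k = d p' m k)"

text \<open>Convex structure: CP is the set of designated convex combinations of preparations
  (q, [(c_1,p_1),...,(c_n,p_n)]) meaning q = sum c_i p_i; likewise CM for measurements.\<close>
definition convex_structure ::
  "'p set \<Rightarrow> 'm set \<Rightarrow> ('m \<Rightarrow> 'o set) \<Rightarrow> ('p \<times> (real \<times> 'p) list) set
    \<Rightarrow> ('m \<times> (real \<times> 'm) list) set \<Rightarrow> bool" where
  "convex_structure P M Om CP CM \<longleftrightarrow>
     (\<forall>(q, cs)\<in>CP. q \<in> P \<and> cs \<noteq> [] \<and> (\<forall>(c, p)\<in>set cs. c > 0 \<and> p \<in> P)
                   \<and> (\<Sum>(c, p)\<leftarrow>cs. c) = 1) \<and>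
     (\<forall>(m, cs)\<in>CM. m \<in> M \<and> cs \<noteq> [] \<and> (\<forall>(c, m')\<in>set cs. c > 0 \<and> m' \<in> M \<and> Om m' = Om m)
                   \<and> (\<Sum>(c, m')\<leftarrow>cs. c) = 1)"

definition perfectly_predictable ::
  "'p set \<Rightarrow> ('m \<Rightarrow> 'o set) \<Rightarrow> ('p \<Rightarrow> 'm \<Rightarrow> 'o \<Rightarrow> real) \<Rightarrow> 'm \<Rightarrow> bool" where
  "perfectly_predictable P Om d m \<longleftrightarrow>
     (\<forall>k\<in>Om m. \<exists>pk\<in>P. \<forall>k'\<in>Om m. d pk m k' = (if k = k' then 1 else 0))"

definition maximally_mixed ::
  "'p set \<Rightarrow> 'm set \<Rightarrow> ('m \<Rightarrow> 'o set) \<Rightarrow> ('p \<Rightarrow> 'm \<Rightarrow> 'o \<Rightarrow> real)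
    \<Rightarrow> ('p \<times> (real \<times> 'p) list) set \<Rightarrow> 'p \<Rightarrow> bool" where
  "maximally_mixed P M Om d CP pmix \<longleftrightarrow>
     pmix \<in> P \<and>
     (\<forall>p'\<in>P. \<exists>q cs. (q, cs) \<in> CP \<and> p' \<in> snd ` set cs \<and> prep_equiv M Om d pmix q) \<and>
     (\<forall>m\<in>M. perfectly_predictable P Om d m \<longrightarrow>
        (\<exists>pk q cs. (\<forall>k\<in>Om m. pk k \<in> P \<and>
                       (\<forall>k'\<in>Om m. d (pk k) m k' = (if k = k' then 1 else 0)))
                  \<and> (q, cs) \<in> CP \<and> snd ` set cs = pk ` Om m
                  \<and> prep_equiv M Om d pmix q))"

definition ont_rep ::
  "'p set \<Rightarrow> 'm set \<Rightarrow> ('m \<Rightarrow> 'o set) \<Rightarrow> ('p \<Rightarrow> 'm \<Rightarrow> 'o \<Rightarrow> real)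
    \<Rightarrow> 'l set \<Rightarrow> ('p \<Rightarrow> 'l \<Rightarrow> real) \<Rightarrow> ('m \<Rightarrow> 'l \<Rightarrow> 'o \<Rightarrow> real) \<Rightarrow> bool" where
  "ont_rep P M Om d \<Omega> \<mu> \<xi> \<longleftrightarrow>
     countable \<Omega> \<and>
     (\<forall>p\<in>P. (\<forall>l\<in>\<Omega>. \<mu> p l \<ge> 0) \<and> (\<mu> p has_sum 1) \<Omega>) \<and>
     (\<forall>m\<in>M. \<forall>l\<in>\<Omega>. (\<forall>k\<in>Om m. \<xi> m l k \<ge> 0) \<and> (\<Sum>k\<in>Om m. \<xi> m l k) = 1) \<and>
     (\<forall>p\<in>P. \<forall>m\<in>M. \<forall>k\<in>Om m. ((\<lambda>l. \<xi> m l k * \<mu> p l) has_sum d p m k) \<Omega>) \<and>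
     (\<forall>l\<in>\<Omega>. \<exists>p\<in>P. \<mu> p l > 0)"

definition prep_noncontextual ::
  "'p set \<Rightarrow> 'm set \<Rightarrow> ('m \<Rightarrow> 'o set) \<Rightarrow> ('p \<Rightarrow> 'm \<Rightarrow> 'o \<Rightarrow> real)
    \<Rightarrow> 'l set \<Rightarrow> ('p \<Rightarrow> 'l \<Rightarrow> real) \<Rightarrow> bool" where
  "prep_noncontextual P M Om d \<Omega> \<mu> \<longleftrightarrow>
     (\<forall>p\<in>P. \<forall>p'\<in>P. prep_equiv M Om d p p' \<longrightarrow> (\<forall>l\<in>\<Omega>. \<mu> p l = \<mu> p' l))"

definition preserves_convexity ::
  "('m \<Rightarrow> 'o set) \<Rightarrow> ('p \<times> (real \<times> 'p) list) set \<Rightarrow> ('m \<times> (real \<times> 'm) list) set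
    \<Rightarrow> 'l set \<Rightarrow> ('p \<Rightarrow> 'l \<Rightarrow> real) \<Rightarrow> ('m \<Rightarrow> 'l \<Rightarrow> 'o \<Rightarrow> real) \<Rightarrow> bool" where
  "preserves_convexity Om CP CM \<Omega> \<mu> \<xi> \<longleftrightarrow>
     (\<forall>(q, cs)\<in>CP. \<forall>l\<in>\<Omega>. \<mu> q l = (\<Sum>(c, p)\<leftarrow>cs. c * \<mu> p l)) \<and>
     (\<forall>(m, cs)\<in>CM. \<forall>l\<in>\<Omega>. \<forall>k\<in>Om m. \<xi> m l k = (\<Sum>(c, m')\<leftarrow>cs. c * \<xi> m' l k))"

end

theory Submission
  imports Defs
begin

text \<open>Every ontic state lies in the support of some preparation, and the maximally mixed
  preparation is equivalent to a mixture containing any given preparation; by noncontextuality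
  and convexity it therefore has full support. It is also equivalent to a mixture of
  preparations each certain to give one outcome of \<open>m\<close>, so at any ontic state \<open>\<lambda>\<close> one of
  these, certain of outcome \<open>k\<^sub>0\<close>, gives \<open>\<lambda>\<close> positive weight. All other outcomes have
  probability zero under it, so \<open>\<xi>\<^sub>m(\<lambda>)\<close> vanishes off \<open>k\<^sub>0\<close> and is the point mass at \<open>k\<^sub>0\<close>.\<close>

lemma mixture_pos_iff:
  assumes "convex_structure P M Om CP CM"
    and "preserves_convexity Om CP CM \<Omega> \<mu> \<xi>"
    and "ont_rep P M Om d \<Omega> \<mu> \<xi>"
    and "(q, cs) \<in> CP" and "l \<in> \<Omega>"
  shows "\<mu> q l > 0 \<longleftrightarrow> (\<exists>(c, p)\<in>set cs. \<mu> p l > 0)"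
proof -
  have weights: "\<forall>(c, p)\<in>set cs. c > 0 \<and> p \<in> P"
    using assms(1,4) unfolding convex_structure_def by fastforce
  have mu_nonneg: "\<mu> p l \<ge> 0" if "p \<in> P" for p
    using assms(3,5) that unfolding ont_rep_def by auto
  define terms where "terms = map (\<lambda>(c, p). c * \<mu> p l) cs"
  have terms_nonneg: "\<And>x. x \<in> set terms \<Longrightarrow> 0 \<le> x"
    using weights mu_nonneg unfolding terms_def by fastforce
  have "\<mu> q l = sum_list terms"
    using assms(2,4,5) unfolding preserves_convexity_def terms_def by fastforce
  then have "\<mu> q l > 0 \<longleftrightarrow> (\<exists>x\<in>set terms. x \<noteq> 0)"
    using sum_list_nonneg[of terms] sum_list_nonneg_eq_0_iff[of terms] terms_nonneg
    by (metis order_less_le)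
  also have "\<dots> \<longleftrightarrow> (\<exists>(c, p)\<in>set cs. \<mu> p l > 0)"
  proof -
    have "c * \<mu> p l \<noteq> 0 \<longleftrightarrow> \<mu> p l > 0" if "(c, p) \<in> set cs" for c p
    proof -
      have "c > 0" "p \<in> P"
        using weights that by auto
      then show ?thesis
        using mu_nonneg[of p] by (auto simp: order_less_le)
    qed
    then show ?thesis
      unfolding terms_def by force
  qed
  finally show ?thesis .
qed

lemma equiv_preparations_same_weight:
  assumes "prep_noncontextual P M Om d \<Omega> \<mu>"
    and "p \<in> P" and "q \<in> P" and "prep_equiv M Om d p q" and "l \<in> \<Omega>"
  shows "\<mu> p l = \<mu> q l"
  using assms unfolding prep_noncontextual_def by blast

lemma maximally_mixed_full_support:
  assumes "convex_structure P M Om CP CM"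
    and "maximally_mixed P M Om d CP pmix"
    and "ont_rep P M Om d \<Omega> \<mu> \<xi>"
    and "prep_noncontextual P M Om d \<Omega> \<mu>"
    and "preserves_convexity Om CP CM \<Omega> \<mu> \<xi>"
    and "l \<in> \<Omega>"
  shows "\<mu> pmix l > 0"
proof -
  obtain p where p: "p \<in> P" "\<mu> p l > 0"
    using assms(3,6) unfolding ont_rep_def by auto
  obtain q cs where q: "(q, cs) \<in> CP" "p \<in> snd ` set cs" "prep_equiv M Om d pmix q"
    using assms(2) p(1) unfolding maximally_mixed_def by blast
  have "\<mu> q l > 0"
    using mixture_pos_iff[OF assms(1,5,3) q(1) assms(6)] q(2) p(2) by force
  moreover have "pmix \<in> P" and "q \<in> P"
    using assms(1,2) q(1) unfolding maximally_mixed_def convex_structure_def by fastforce+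
  ultimately show ?thesis
    using equiv_preparations_same_weight[OF assms(4) _ _ q(3) assms(6)] by simp
qed

lemma response_zero_on_impossible_outcome:
  assumes "ont_rep P M Om d \<Omega> \<mu> \<xi>"
    and "p \<in> P" and "m \<in> M" and "k \<in> Om m" and "l \<in> \<Omega>"
    and "\<mu> p l > 0" and "d p m k = 0"
  shows "\<xi> m l k = 0"
proof -
  have terms_nonneg: "\<xi> m l' k * \<mu> p l' \<ge> 0" if "l' \<in> \<Omega>" for l'
    using assms(1-4) that unfolding ont_rep_def by auto
  have "((\<lambda>l'. \<xi> m l' k * \<mu> p l') has_sum d p m k) \<Omega>"
    using assms(1-4) unfolding ont_rep_def by auto
  then have "(\<Sum>l'\<in>{l}. \<xi> m l' k * \<mu> p l') \<le> 0"
    unfolding assms(7) by (rule finite_sum_le_has_sum) (use assms(5) terms_nonneg in auto)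
  then have "\<xi> m l k * \<mu> p l = 0"
    using terms_nonneg[OF assms(5)] by simp
  with assms(6) show ?thesis by simp
qed

lemma point_mass_if_sum_one:
  fixes f :: "'a \<Rightarrow> real"
  assumes "finite A" and "k0 \<in> A" and "sum f A = 1"
    and "\<And>k. k \<in> A \<Longrightarrow> k \<noteq> k0 \<Longrightarrow> f k = 0" and "k \<in> A"
  shows "f k = (if k = k0 then 1 else 0)"
proof -
  have "sum f (A - {k0}) = 0"
    using assms(4) by (intro sum.neutral) auto
  then have "sum f A = f k0"
    using sum.remove[OF assms(1,2), of f] by simp
  then show ?thesis
    using assms(3-5) by auto
qed

theorem mainTheorem1:
  fixes P :: "'p set" and M :: "'m set" and Om :: "'m \<Rightarrow> 'o set"
    and d :: "'p \<Rightarrow> 'm \<Rightarrow> 'o \<Rightarrow> real"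
    and CP :: "('p \<times> (real \<times> 'p) list) set" and CM :: "('m \<times> (real \<times> 'm) list) set"
    and pmix :: 'p and m :: 'm
    and \<Omega> :: "'l set" and \<mu> :: "'p \<Rightarrow> 'l \<Rightarrow> real" and \<xi> :: "'m \<Rightarrow> 'l \<Rightarrow> 'o \<Rightarrow> real"
  assumes "op_theory P M Om d"
    and "convex_structure P M Om CP CM"
    and "maximally_mixed P M Om d CP pmix"
    and "m \<in> M"
    and "perfectly_predictable P Om d m"
    and "ont_rep P M Om d \<Omega> \<mu> \<xi>"
    and "prep_noncontextual P M Om d \<Omega> \<mu>"
    and "preserves_convexity Om CP CM \<Omega> \<mu> \<xi>"
  shows "\<forall>l\<in>\<Omega>. \<forall>k\<in>Om m. \<xi> m l k \<in> {0, 1}"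
proof (intro ballI)
  fix l k assume l: "l \<in> \<Omega>" and k: "k \<in> Om m"
  obtain pk q cs where pk: "\<forall>k\<in>Om m. pk k \<in> P \<and>
                       (\<forall>k'\<in>Om m. d (pk k) m k' = (if k = k' then 1 else 0))"
      and q: "(q, cs) \<in> CP" "snd ` set cs = pk ` Om m" "prep_equiv M Om d pmix q"
    using assms(3-5) unfolding maximally_mixed_def by blast
  have "pmix \<in> P" and "q \<in> P"
    using assms(2,3) q(1) unfolding maximally_mixed_def convex_structure_def by fastforce+
  then have "\<mu> q l > 0"
    using maximally_mixed_full_support[OF assms(2,3,6-8) l]
      equiv_preparations_same_weight[OF assms(7) _ _ q(3) l] by simp
  then obtain k0 where k0: "k0 \<in> Om m" "\<mu> (pk k0) l > 0"
    using mixture_pos_iff[OF assms(2,8,6) q(1) l] q(2) by force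
  have "\<xi> m l k' = 0" if "k' \<in> Om m" "k' \<noteq> k0" for k'
    using response_zero_on_impossible_outcome[OF assms(6) _ assms(4) that(1) l k0(2)]
      pk k0(1) that by auto
  moreover have "finite (Om m)"
    using assms(1,4) unfolding op_theory_def by auto
  moreover have "(\<Sum>k\<in>Om m. \<xi> m l k) = 1"
    using assms(4,6) l unfolding ont_rep_def by auto
  ultimately have "\<xi> m l k = (if k = k0 then 1 else 0)"
    using point_mass_if_sum_one[OF _ k0(1) _ _ k] by blast
  then show "\<xi> m l k \<in> {0, 1}"
    by simp
qed

end
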